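(* Let $d_1\ge\cdots\ge d_n\ge1$ be integers, $\xi$ as in the context, and suppose that $d_h=\Omega(\sqrt{M_1})$ and $d_{h+1}=O(\sqrt{M_1})$ for some $1\le h\le n-1$. Put $H_k=\sum_{i\le h}[d_i]_k$ and $L_k=M_k-H_k$. Then (a) $\xi=O\left(\frac{H_1H_2^2+M_2M_3}{M_1^3}+\frac{L_2M_2M_3}{M_1^4}+\frac{L_2L_3H_4}{M_1^5}\right)$; (b) if moreover $L_2=\Omega(M_1)$, then $\xi=O\left(\frac{H_1H_2^2}{M_1^3}+\frac{L_2M_2M_3}{M_1^4}+\frac{L_2L_3H_4}{M_1^5}\right)$.
   Context: For an integer $k\ge1$, $[x]_k=x(x-1)\cdots(x-k+1)$ and $M_k=\sum_{i=1}^n[d_i]_k$. Define $U_1=\sum_{v}(d_v-2)\min\{[d_v]_2/M_1,1\}$; $U_2=\sum_{u<v}\min\{[d_u]_2[d_v]_2/M_1^2,d_ud_v/M_1\}$; $U_3=\sum_{i\ne j}\sum_{w}\min\{[d_i]_2[d_j]_2/M_1^2,d_id_j/M_1\}\min\{[d_i-2]_2[d_w]_2/M_1^2,1\}(d_w-2)$; $U_4=\sum_{i\ne j}\min\{[d_i]_3[d_j]_2/M_1^2,[d_i]_2d_j/M_1\}$; $U_5=\sum_{i\ne j}\sum_{w}\min\{d_i[d_j]_2/M_1^2,d_j/M_1\}\min\{[d_i-2]_2[d_w]_2/M_1^2,(d_i-2)d_w/M_1\}$; $\xi=U_5+\frac{U_1+U_2^2+U_3}{M_1}+\frac{U_4M_2}{M_1^2}+\frac{U_2M_2^2}{M_1^3}+\frac{M_2}{M_1^2}+\frac{M_3M_2}{M_1^3}+\frac{M_2^3}{M_1^4}$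 (vertex indices range over $\{1,\ldots,n\}$). The $O$ constants in the conclusion depend only on the implied constants in the hypotheses. *)

theory Defs
  imports Complex_Main
begin

text \<open>Falling factorial [x]_k = x(x-1)...(x-k+1), over the reals (arguments may be negative,
  e.g. [d_i - 2]_2 with d_i = 1).\<close>
definition ff :: "real \<Rightarrow> nat \<Rightarrow> real" where
  "ff x k = (\<Prod>j<k. x - real j)"

text \<open>Degree sequence d indexed by vertices 1..n.\<close>
definition Mk :: "nat \<Rightarrow> nat \<Rightarrow> (nat \<Rightarrow> nat) \<Rightarrow> real" where
  "Mk k n d = (\<Sum>i\<in>{1..n}. ff (real (d i)) k)"

definition U1 :: "nat \<Rightarrow> (nat \<Rightarrow> nat) \<Rightarrow> real" where
  "U1 n d = (let M1 = Mk 1 n d in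
     \<Sum>v\<in>{1..n}. (real (d v) - 2) * min (ff (d v) 2 / M1) 1)"

definition U2 :: "nat \<Rightarrow> (nat \<Rightarrow> nat) \<Rightarrow> real" where
  "U2 n d = (let M1 = Mk 1 n d in
     \<Sum>(u,v)\<in>{(u,v). u \<in> {1..n} \<and> v \<in> {1..n} \<and> u < v}.
        min (ff (d u) 2 * ff (d v) 2 / M1^2) (real (d u) * real (d v) / M1))"

definition U3 :: "nat \<Rightarrow> (nat \<Rightarrow> nat) \<Rightarrow> real" where
  "U3 n d = (let M1 = Mk 1 n d in
     \<Sum>(i,j)\<in>{(i,j). i \<in> {1..n} \<and> j \<in> {1..n} \<and> i \<noteq> j}. \<Sum>w\<in>{1..n}.
        min (ff (d i) 2 * ff (d j) 2 / M1^2) (real (d i) * real (d j) / M1)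
        * min (ff (real (d i) - 2) 2 * ff (d w) 2 / M1^2) 1 * (real (d w) - 2))"

definition U4 :: "nat \<Rightarrow> (nat \<Rightarrow> nat) \<Rightarrow> real" where
  "U4 n d = (let M1 = Mk 1 n d in
     \<Sum>(i,j)\<in>{(i,j). i \<in> {1..n} \<and> j \<in> {1..n} \<and> i \<noteq> j}.
        min (ff (d i) 3 * ff (d j) 2 / M1^2) (ff (d i) 2 * real (d j) / M1))"

definition U5 :: "nat \<Rightarrow> (nat \<Rightarrow> nat) \<Rightarrow> real" where
  "U5 n d = (let M1 = Mk 1 n d in
     \<Sum>(i,j)\<in>{(i,j). i \<in> {1..n} \<and> j \<in> {1..n} \<and> i \<noteq> j}. \<Sum>w\<in>{1..n}.
        min (real (d i) * ff (d j) 2 / M1^2) (real (d j) / M1)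
        * min (ff (real (d i) - 2) 2 * ff (d w) 2 / M1^2) ((real (d i) - 2) * real (d w) / M1))"

definition xi :: "nat \<Rightarrow> (nat \<Rightarrow> nat) \<Rightarrow> real" where
  "xi n d = (let M1 = Mk 1 n d; M2 = Mk 2 n d; M3 = Mk 3 n d in
     U5 n d + (U1 n d + (U2 n d)^2 + U3 n d) / M1 + U4 n d * M2 / M1^2
     + U2 n d * M2^2 / M1^3 + M2 / M1^2 + M3 * M2 / M1^3 + M2^3 / M1^4)"

definition Hk :: "nat \<Rightarrow> nat \<Rightarrow> (nat \<Rightarrow> nat) \<Rightarrow> real" where
  "Hk k h d = (\<Sum>i\<in>{1..h}. ff (real (d i)) k)"

definition Lk :: "nat \<Rightarrow> nat \<Rightarrow> nat \<Rightarrow> (nat \<Rightarrow> nat) \<Rightarrow> real" where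
  "Lk k h n d = Mk k n d - Hk k h d"

definition admissible :: "real \<Rightarrow> real \<Rightarrow> nat \<Rightarrow> nat \<Rightarrow> (nat \<Rightarrow> nat) \<Rightarrow> bool" where
  "admissible c1 c2 n h d \<longleftrightarrow>
     (\<forall>i\<in>{1..n}. d i \<ge> 1) \<and> (\<forall>i j. 1 \<le> i \<longrightarrow> i \<le> j \<longrightarrow> j \<le> n \<longrightarrow> d j \<le> d i) \<and>
     1 \<le> h \<and> h \<le> n - 1 \<and>
     real (d h) \<ge> c1 * sqrt (Mk 1 n d) \<and> real (d (h+1)) \<le> c2 * sqrt (Mk 1 n d)"

end

theory Submission
  imports Defs
begin

text \<open>Call the first \<open>h\<close> vertices high and the others low. Every minimum in \<open>U\<^sub>1, \<dots>, U\<^sub>5\<close>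
  is bounded by one of its two arguments, chosen according to which of the vertices involved are
  high, in such a way that the bound is a product of one factor per vertex. The sums then factor into
  the moments \<open>H\<^sub>k, L\<^sub>k, M\<^sub>k\<close>, giving \<open>\<xi> \<le> P / M\<^sub>1\<^sup>5\<close> for a polynomial \<open>P\<close> with
  nonnegative coefficients in \<open>M\<^sub>1, H\<^sub>1, \<dots>, H\<^sub>4, L\<^sub>2, L\<^sub>3, L\<^sub>4\<close>.

  If \<open>c\<^sub>1 \<surd>M\<^sub>1 \<ge> 4\<close>, a high degree \<open>x\<close> satisfies \<open>[x]\<^sub>2 \<ge> (3/4) c\<^sub>1 \<surd>M\<^sub>1 x\<close> and
  \<open>[x]\<^sub>3 \<ge> (c\<^sub>1/2) \<surd>M\<^sub>1 [x]\<^sub>2\<close>, while low degrees are \<open>O(\<surd>M\<^sub>1)\<close>; together with the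
  Cauchy--Schwarz inequality \<open>M\<^sub>2\<^sup>2 \<le> M\<^sub>1 (M\<^sub>3 + M\<^sub>2)\<close> this absorbs every monomial of \<open>P\<close> into
  the claimed bound. If \<open>c\<^sub>1 \<surd>M\<^sub>1 < 4\<close>, then \<open>M\<^sub>1\<close> is bounded, hence so is \<open>P\<close>, while the
  claimed bound is at least \<open>H\<^sub>1 H\<^sub>2\<^sup>2 / M\<^sub>1\<^sup>3\<close>, which is bounded below unless all degrees are 1, and
  then \<open>\<xi> = 0\<close>. Part (b) follows because \<open>L\<^sub>2 \<ge> c\<^sub>3 M\<^sub>1\<close> gives
  \<open>M\<^sub>2 M\<^sub>3 / M\<^sub>1\<^sup>3 \<le> L\<^sub>2 M\<^sub>2 M\<^sub>3 / (c\<^sub>3 M\<^sub>1\<^sup>4)\<close>.\<close>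

section \<open>Falling factorials\<close>

lemma ff_1 [simp]: "ff x 1 = x" "ff x (Suc 0) = x"
  by (simp_all add: ff_def)

lemma ff_2: "ff x 2 = x * (x - 1)"
  by (simp add: ff_def numeral_2_eq_2)

lemma ff_3: "ff x 3 = x * (x - 1) * (x - 2)"
  by (simp add: ff_def eval_nat_numeral algebra_simps)

lemma ff_4: "ff x 4 = x * (x - 1) * (x - 2) * (x - 3)"
  by (simp add: ff_def eval_nat_numeral algebra_simps)

lemma ff_of_nat_eq_0: "p < k \<Longrightarrow> ff (real p) k = 0"
  unfolding ff_def by (rule prod_zero) auto

lemma ff_of_nat_nonneg: "0 \<le> ff (real p) k"
proof (cases "p < k")
  case False
  then show ?thesis
    unfolding ff_def by (intro prod_nonneg) auto
qed (simp add: ff_of_nat_eq_0)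

lemma ff_of_nat_le_power: "ff (real p) k \<le> real p ^ k"
proof (cases "p < k")
  case False
  then have "(\<Prod>j<k. real p - real j) \<le> (\<Prod>j<k. real p)"
    by (intro prod_mono) auto
  then show ?thesis
    unfolding ff_def by simp
qed (simp add: ff_of_nat_eq_0)

lemma ff_2_mult_ff_2_shift: "ff x 2 * ff (x - 2) 2 = ff x 4"
  by (simp add: ff_2 ff_4 algebra_simps)

lemma ff_2_shift_nonneg:
  assumes "1 \<le> p"
  shows "0 \<le> ff (real p - 2) 2"
proof (cases "p = 1")
  case False
  then have "real p - 2 = real (p - 2)"
    using assms by (simp add: of_nat_diff)
  then show ?thesis
    using ff_of_nat_nonneg by metis
qed (simp add: ff_2)

lemma mult_ff_2_shift_le_ff_3:
  assumes "2 \<le> p"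
  shows "real p * ff (real p - 2) 2 \<le> ff (real p) 3"
proof -
  have "real p * (real p - 2) * (real p - 3) \<le> real p * (real p - 2) * (real p - 1)"
    using assms by (intro mult_left_mono) auto
  then show ?thesis
    by (simp add: ff_2 ff_3 algebra_simps)
qed

lemma ff_2_ge:
  fixes x t :: real
  assumes "4 \<le> x" "t \<le> x"
  shows "3/4 * t * x \<le> ff x 2"
proof -
  have "3/4 * t * x \<le> (x - 1) * x"
    using assms by (intro mult_right_mono) auto
  then show ?thesis
    by (simp add: ff_2 algebra_simps)
qed

lemma ff_3_ge:
  fixes x t :: real
  assumes "4 \<le> x" "t \<le> x"
  shows "t / 2 * ff x 2 \<le> ff x 3"
proof -
  have "t / 2 * (x * (x - 1)) \<le> (x - 2) * (x * (x - 1))"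
    using assms by (intro mult_right_mono) auto
  then show ?thesis
    by (simp add: ff_2 ff_3 algebra_simps)
qed

lemma ff_2_le:
  fixes x t :: real
  assumes "0 \<le> x" "x \<le> t"
  shows "ff x 2 \<le> t * x"
proof -
  have "(x - 1) * x \<le> t * x"
    using assms by (intro mult_right_mono) auto
  then show ?thesis
    by (simp add: ff_2 mult.commute)
qed

lemma ff_3_le:
  assumes "real p \<le> t"
  shows "ff (real p) 3 \<le> t * ff (real p) 2"
proof -
  have "(real p - 2) * ff (real p) 2 \<le> t * ff (real p) 2"
    using assms ff_of_nat_nonneg[of p 2] by (intro mult_right_mono) auto
  then show ?thesis
    by (simp add: ff_2 ff_3 algebra_simps)
qed

lemma ff_4_le:
  assumes "real p \<le> t"
  shows "ff (real p) 4 \<le> t^2 * ff (real p) 2"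
proof (cases "p < 4")
  case True
  then show ?thesis
    using ff_of_nat_nonneg[of p 2] by (simp add: ff_of_nat_eq_0)
next
  case False
  then have "(real p - 2) * (real p - 3) \<le> t^2"
    using assms power_mono[OF assms, of 2]
    by (simp add: power2_eq_square mult_mono)
  then have "ff (real p - 2) 2 * ff (real p) 2 \<le> t^2 * ff (real p) 2"
    using ff_of_nat_nonneg[of p 2] by (intro mult_right_mono) (auto simp: ff_2 algebra_simps)
  then show ?thesis
    by (simp add: ff_2_mult_ff_2_shift[symmetric] mult.commute)
qed

section \<open>Moments of the degree sequence\<close>

lemma Mk_nonneg: "0 \<le> Mk k n d"
  unfolding Mk_def by (intro sum_nonneg) (simp add: ff_of_nat_nonneg)

lemma Hk_nonneg: "0 \<le> Hk k h d"
  unfolding Hk_def by (intro sum_nonneg) (simp add: ff_of_nat_nonneg)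

lemma Hk_add_Lk: "Hk k h d + Lk k h n d = Mk k n d"
  unfolding Lk_def by simp

lemma Lk_eq_sum:
  assumes "h \<le> n"
  shows "Lk k h n d = (\<Sum>i = Suc h..n. ff (real (d i)) k)"
proof -
  have "{1..n} = {1..h} \<union> {Suc h..n}" and "{1..h} \<inter> {Suc h..n} = {}"
    using assms by auto
  then show ?thesis
    unfolding Lk_def Mk_def Hk_def by (simp add: sum.union_disjoint)
qed

lemma Lk_nonneg: "h \<le> n \<Longrightarrow> 0 \<le> Lk k h n d"
  by (simp add: Lk_eq_sum sum_nonneg ff_of_nat_nonneg)

lemma degree_le_M1: "i \<in> {1..n} \<Longrightarrow> real (d i) \<le> Mk 1 n d"
  unfolding Mk_def ff_1 by (rule member_le_sum) auto

lemma Mk_le_M1_power: "Mk (Suc k) n d \<le> Mk 1 n d ^ Suc k"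
proof -
  have "Mk (Suc k) n d \<le> (\<Sum>i\<in>{1..n}. real (d i) * Mk 1 n d ^ k)"
    unfolding Mk_def[of "Suc k"]
  proof (intro sum_mono)
    fix i assume i: "i \<in> {1..n}"
    have "ff (real (d i)) (Suc k) \<le> real (d i) * real (d i) ^ k"
      using ff_of_nat_le_power[of "d i" "Suc k"] by simp
    also have "\<dots> \<le> real (d i) * Mk 1 n d ^ k"
      using degree_le_M1[OF i] by (intro mult_left_mono power_mono) auto
    finally show "ff (real (d i)) (Suc k) \<le> real (d i) * Mk 1 n d ^ k" .
  qed
  also have "\<dots> = Mk 1 n d ^ Suc k"
    unfolding sum_distrib_right[symmetric] Mk_def[of 1] ff_1 by simp
  finally show ?thesis .
qed

text \<open>Cauchy--Schwarz for the weights \<open>d\<^sub>i\<close> and the vectors \<open>d\<^sub>i - 1\<close>, since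
  \<open>[x]\<^sub>3 + [x]\<^sub>2 = x (x - 1)\<^sup>2\<close>.\<close>
lemma M2_squared_le: "Mk 2 n d ^ 2 \<le> Mk 1 n d * (Mk 3 n d + Mk 2 n d)"
proof -
  define x where "x i = real (d i)" for i
  have pair: "x i * (x i - 1) * (x j * (x j - 1))
      \<le> x i * (x i - 1)^2 * x j / 2 + x i * (x j * (x j - 1)^2) / 2" for i j
  proof -
    have "x i * (x i - 1)^2 * x j / 2 + x i * (x j * (x j - 1)^2) / 2
        - x i * (x i - 1) * (x j * (x j - 1)) = x i * x j * (x i - x j)^2 / 2"
      by (simp add: power2_eq_square field_simps)
    moreover have "0 \<le> x i * x j * (x i - x j)^2"
      by (simp add: x_def)
    ultimately show ?thesis
      by linarith
  qed
  have "Mk 2 n d ^ 2 = (\<Sum>i\<in>{1..n}. \<Sum>j\<in>{1..n}. x i * (x i - 1) * (x j * (x j - 1)))"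
    by (simp add: Mk_def ff_2 x_def power2_eq_square sum_product)
  also have "\<dots> \<le> (\<Sum>i\<in>{1..n}. \<Sum>j\<in>{1..n}.
      x i * (x i - 1)^2 * x j / 2 + x i * (x j * (x j - 1)^2) / 2)"
    by (intro sum_mono pair)
  also have "\<dots> = (\<Sum>i\<in>{1..n}. x i * (x i - 1)^2) * (\<Sum>i\<in>{1..n}. x i)"
    by (simp only: sum.distrib sum_divide_distrib[symmetric] sum_product[symmetric]) simp
  also have "\<dots> = Mk 1 n d * (Mk 3 n d + Mk 2 n d)"
    unfolding Mk_def sum.distrib[symmetric] x_def ff_1
    by (simp add: ff_2 ff_3 power2_eq_square algebra_simps)
  finally show ?thesis .
qed

lemma Hk_eq_sum_of_bool:
  assumes "h \<le> n"
  shows "Hk k h d = (\<Sum>i\<in>{1..n}. of_bool (i \<le> h) * ff (real (d i)) k)"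
proof -
  have "(\<Sum>i\<in>{1..n}. of_bool (i \<le> h) * ff (real (d i)) k)
      = (\<Sum>i\<in>{1..n}. if i \<le> h then ff (real (d i)) k else 0)"
    by (intro sum.cong) auto
  also have "\<dots> = (\<Sum>i\<in>{i \<in> {1..n}. i \<le> h}. ff (real (d i)) k)"
    by (rule sum.inter_filter[symmetric]) simp
  also have "{i \<in> {1..n}. i \<le> h} = {1..h}"
    using assms by auto
  finally show ?thesis
    unfolding Hk_def ..
qed

lemma Lk_eq_sum_of_bool:
  assumes "h \<le> n"
  shows "Lk k h n d = (\<Sum>i\<in>{1..n}. of_bool (\<not> i \<le> h) * ff (real (d i)) k)"
proof -
  have "(\<Sum>i\<in>{1..n}. of_bool (\<not> i \<le> h) * ff (real (d i)) k)
      = (\<Sum>i\<in>{1..n}. ff (real (d i)) k - of_bool (i \<le> h) * ff (real (d i)) k)"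
    by (intro sum.cong) auto
  then show ?thesis
    using Hk_eq_sum_of_bool[OF assms] by (simp add: Lk_def Mk_def sum_subtractf)
qed

lemma Hk_1_eq_sum_of_bool:
  "h \<le> n \<Longrightarrow> (\<Sum>i\<in>{1..n}. of_bool (i \<le> h) * real (d i)) = Hk 1 h d"
  using Hk_eq_sum_of_bool[of h n 1 d] by simp

lemma admissibleD:
  assumes "admissible c1 c2 n h d"
  shows "1 \<le> h" "h < n" "\<forall>i\<in>{1..n}. 1 \<le> d i" "2 \<le> Mk 1 n d"
    and "i \<in> {1..h} \<Longrightarrow> c1 * sqrt (Mk 1 n d) \<le> real (d i)"
    and "i \<in> {Suc h..n} \<Longrightarrow> real (d i) \<le> c2 * sqrt (Mk 1 n d)"
proof -
  note adm = assms[unfolded admissible_def]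
  show h: "1 \<le> h" "h < n" and deg: "\<forall>i\<in>{1..n}. 1 \<le> d i"
    using adm by auto
  have "real n = (\<Sum>i\<in>{1..n}. 1)"
    by simp
  also have "\<dots> \<le> Mk 1 n d"
    unfolding Mk_def using deg by (intro sum_mono) auto
  finally show "2 \<le> Mk 1 n d"
    using h by linarith
  show "c1 * sqrt (Mk 1 n d) \<le> real (d i)" if "i \<in> {1..h}"
  proof -
    have "d h \<le> d i"
      using adm that by auto
    then show ?thesis
      using adm by linarith
  qed
  show "real (d i) \<le> c2 * sqrt (Mk 1 n d)" if "i \<in> {Suc h..n}"
  proof -
    have "d i \<le> d (h + 1)"
      using adm that by auto
    then show ?thesis
      using adm by linarith
  qed
qed

section \<open>Bounds on the sums \<open>U\<^sub>k\<close>\<close>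

lemma double_sum_product:
  "(\<Sum>u\<in>A. \<Sum>v\<in>B. f u * g v / (c::real)) = sum f A * sum g B / c"
  by (simp add: sum_distrib_left[symmetric] sum_distrib_right[symmetric] sum_divide_distrib[symmetric])

lemma triple_sum_product:
  "(\<Sum>u\<in>A. \<Sum>v\<in>B. \<Sum>w\<in>C. f u * g v * k w / (c::real)) = sum f A * sum g B * sum k C / c"
proof -
  have "(\<Sum>w\<in>C. f u * g v * k w / c) = f u * (g v * sum k C) / c" for u v
    by (simp add: sum_distrib_left[symmetric] sum_divide_distrib[symmetric] mult.assoc)
  then show ?thesis
    using double_sum_product[of f "\<lambda>v. g v * sum k C" c B A]
    by (simp add: sum_distrib_right[symmetric] mult.assoc)
qed

lemma sum_pairs_le_double_sum:
  fixes F G :: "nat \<Rightarrow> nat \<Rightarrow> real"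
  assumes "S \<subseteq> A \<times> B" "finite A" "finite B"
    and "\<And>u v. (u, v) \<in> S \<Longrightarrow> F u v \<le> G u v"
    and "\<And>u v. u \<in> A \<Longrightarrow> v \<in> B \<Longrightarrow> 0 \<le> G u v"
  shows "(\<Sum>(u, v)\<in>S. F u v) \<le> (\<Sum>u\<in>A. \<Sum>v\<in>B. G u v)"
proof -
  have "(\<Sum>(u, v)\<in>S. F u v) \<le> (\<Sum>(u, v)\<in>S. G u v)"
    using assms(4) by (intro sum_mono) auto
  also have "\<dots> \<le> (\<Sum>(u, v)\<in>A \<times> B. G u v)"
    using assms by (intro sum_mono2) auto
  finally show ?thesis
    by (simp add: sum.cartesian_product)
qed

text \<open>In the following summand bounds the booleans \<open>b, b', b''\<close> say which of the vertices
  involved are high.\<close>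

lemma U1_summand_le:
  assumes "M > 0"
  shows "(real p - 2) * min (ff (real p) 2 / M) 1 \<le> ff (real p) 3 / M"
proof (cases "p \<le> 1")
  case True
  then have "ff (real p) 2 = 0" "ff (real p) 3 = 0"
    by (auto simp: ff_of_nat_eq_0)
  then show ?thesis
    by simp
next
  case False
  then have "(real p - 2) * min (ff (real p) 2 / M) 1 \<le> (real p - 2) * (ff (real p) 2 / M)"
    by (intro mult_left_mono) auto
  then show ?thesis
    by (simp add: ff_2 ff_3 algebra_simps)
qed

lemma U2_summand_le:
  fixes a a' x x' M :: real
  assumes "0 \<le> a" "0 \<le> a'" "M > 0"
  shows "min (a * a' / M^2) (x * x' / M)
    \<le> of_bool b * x * (of_bool b' * x') / M + a * (of_bool (\<not> b') * a') / M^2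
      + of_bool (\<not> b) * a * a' / M^2"
proof -
  have "0 \<le> a * a' / M^2"
    using assms by simp
  then show ?thesis
    by (cases b; cases b') (auto simp: min_le_iff_disj)
qed

lemma U4_summand_le:
  fixes a a' x x' M :: real
  shows "min (a * a' / M^2) (x * x' / M) \<le> a * (of_bool (\<not> b) * a') / M^2 + x * (of_bool b * x') / M"
  by (cases b) (auto simp: min_le_iff_disj)

lemma U2_summand_mult_ff_2_shift_le:
  fixes a' x' M :: real
  assumes "1 \<le> p" "0 \<le> a'" "0 \<le> x'" "M > 0"
  shows "min (ff (real p) 2 * a' / M^2) (real p * x' / M) * ff (real p - 2) 2
    \<le> ff (real p) 3 * (of_bool b * x') / M + ff (real p) 4 * (of_bool (\<not> b) * a') / M^2"
proof (cases "p = 1")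
  case True
  then show ?thesis
    using assms by (auto simp: ff_2 ff_3 ff_4 min_def)
next
  case False
  with assms have p: "2 \<le> p"
    by simp
  have c: "0 \<le> ff (real p - 2) 2"
    using assms(1) by (rule ff_2_shift_nonneg)
  show ?thesis
  proof (cases b)
    case True
    have "min (ff (real p) 2 * a' / M^2) (real p * x' / M) * ff (real p - 2) 2
        \<le> real p * x' / M * ff (real p - 2) 2"
      using c by (intro mult_right_mono) auto
    also have "\<dots> = real p * ff (real p - 2) 2 * x' / M"
      by simp
    also have "\<dots> \<le> ff (real p) 3 * x' / M"
      using mult_ff_2_shift_le_ff_3[OF p] assms by (intro divide_right_mono mult_right_mono) auto
    finally show ?thesis
      using True by simp
  next
    case False
    have "min (ff (real p) 2 * a' / M^2) (real p * x' / M) * ff (real p - 2) 2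
        \<le> ff (real p) 2 * a' / M^2 * ff (real p - 2) 2"
      using c by (intro mult_right_mono) auto
    also have "\<dots> = ff (real p) 4 * a' / M^2"
      by (simp flip: ff_2_mult_ff_2_shift)
    finally show ?thesis
      using False by simp
  qed
qed

lemma U3_last_factor_le:
  fixes c M :: real
  assumes "1 \<le> r" "0 \<le> c" "M > 0"
  shows "min (c * ff (real r) 2 / M^2) 1 * (real r - 2)
    \<le> of_bool b * real r + of_bool (\<not> b) * c * ff (real r) 3 / M^2"
proof (cases "r = 1")
  case True
  then show ?thesis
    using assms by (simp add: ff_2 ff_3)
next
  case False
  with assms have r: "0 \<le> real r - 2"
    by simp
  show ?thesis
  proof (cases b)
    case True
    have "min (c * ff (real r) 2 / M^2) 1 * (real r - 2) \<le> 1 * (real r - 2)"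
      using r by (intro mult_right_mono) auto
    then show ?thesis
      using True by simp
  next
    case False
    have "min (c * ff (real r) 2 / M^2) 1 * (real r - 2) \<le> c * ff (real r) 2 / M^2 * (real r - 2)"
      using r by (intro mult_right_mono) auto
    then show ?thesis
      using False by (simp add: ff_2 ff_3 algebra_simps)
  qed
qed

lemma U3_summand_le:
  fixes a' x' M :: real
  assumes "1 \<le> p" "1 \<le> r" "0 \<le> a'" "0 \<le> x'" "M > 0"
  shows "min (ff (real p) 2 * a' / M^2) (real p * x' / M)
      * min (ff (real p - 2) 2 * ff (real r) 2 / M^2) 1 * (real r - 2)
    \<le> of_bool b * real p * (of_bool b' * x') * (of_bool b'' * real r) / M
      + ff (real p) 2 * (of_bool (\<not> b') * a') * (of_bool b'' * real r) / M^2
      + of_bool (\<not> b) * ff (real p) 2 * a' * (of_bool b'' * real r) / M^2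
      + ff (real p) 3 * (of_bool b' * x') * (of_bool (\<not> b'') * ff (real r) 3) / M^3
      + ff (real p) 4 * (of_bool (\<not> b') * a') * (of_bool (\<not> b'') * ff (real r) 3) / M^4"
proof -
  define f where "f = min (ff (real p) 2 * a' / M^2) (real p * x' / M)"
  define c where "c = ff (real p - 2) 2"
  have f: "0 \<le> f"
    using assms ff_of_nat_nonneg[of p 2] unfolding f_def by simp
  have c: "0 \<le> c"
    using assms(1) unfolding c_def by (rule ff_2_shift_nonneg)
  have f_le: "f \<le> of_bool b * real p * (of_bool b' * x') / M + ff (real p) 2 * (of_bool (\<not> b') * a') / M^2
      + of_bool (\<not> b) * ff (real p) 2 * a' / M^2"
    unfolding f_def using assms ff_of_nat_nonneg[of p 2] by (intro U2_summand_le) auto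
  have fc_le: "f * c \<le> ff (real p) 3 * (of_bool b' * x') / M + ff (real p) 4 * (of_bool (\<not> b') * a') / M^2"
    unfolding f_def c_def using assms by (intro U2_summand_mult_ff_2_shift_le) auto
  have "f * min (c * ff (real r) 2 / M^2) 1 * (real r - 2)
      \<le> f * (of_bool b'' * real r + of_bool (\<not> b'') * c * ff (real r) 3 / M^2)"
    using mult_left_mono[OF U3_last_factor_le[of r c M b''] f] c assms by (simp add: mult.assoc)
  also have "\<dots> = f * (of_bool b'' * real r) + f * c * (of_bool (\<not> b'') * ff (real r) 3) / M^2"
    by (simp add: algebra_simps)
  also have "\<dots> \<le> (of_bool b * real p * (of_bool b' * x') / M + ff (real p) 2 * (of_bool (\<not> b') * a') / M^2
      + of_bool (\<not> b) * ff (real p) 2 * a' / M^2) * (of_bool b'' * real r)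
      + (ff (real p) 3 * (of_bool b' * x') / M + ff (real p) 4 * (of_bool (\<not> b') * a') / M^2)
        * (of_bool (\<not> b'') * ff (real r) 3) / M^2"
    using f_le fc_le assms ff_of_nat_nonneg[of r 3]
    by (intro add_mono divide_right_mono mult_right_mono) auto
  also have "\<dots> = of_bool b * real p * (of_bool b' * x') * (of_bool b'' * real r) / M
      + ff (real p) 2 * (of_bool (\<not> b') * a') * (of_bool b'' * real r) / M^2
      + of_bool (\<not> b) * ff (real p) 2 * a' * (of_bool b'' * real r) / M^2
      + ff (real p) 3 * (of_bool b' * x') * (of_bool (\<not> b'') * ff (real r) 3) / M^3
      + ff (real p) 4 * (of_bool (\<not> b') * a') * (of_bool (\<not> b'') * ff (real r) 3) / M^4"
    using assms by (simp add: field_simps eval_nat_numeral)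
  finally show ?thesis
    unfolding f_def c_def .
qed

lemma U5_summand_le:
  fixes a' x' a'' x'' M :: real
  assumes "1 \<le> p" "0 \<le> a'" "0 \<le> x'" "0 \<le> a''" "0 \<le> x''" "M > 0"
  shows "min (real p * a' / M^2) (x' / M) * min (ff (real p - 2) 2 * a'' / M^2) ((real p - 2) * x'' / M)
    \<le> ff (real p) 2 * a' * (of_bool b * x'') / M^3 + ff (real p) 3 * a' * (of_bool (\<not> b) * a'') / M^4"
proof (cases "p \<le> 2")
  case True
  have "min (ff (real p - 2) 2 * a'' / M^2) ((real p - 2) * x'' / M) \<le> 0"
  proof (cases "p = 1")
    case True
    then show ?thesis
      using assms by (auto simp: min_le_iff_disj divide_nonpos_pos)
  next
    case False
    with True assms have "p = 2"
      by simp
    then show ?thesis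
      by (simp add: ff_2)
  qed
  then have "min (real p * a' / M^2) (x' / M) * min (ff (real p - 2) 2 * a'' / M^2) ((real p - 2) * x'' / M) \<le> 0"
    using assms by (intro mult_nonneg_nonpos) auto
  moreover have "0 \<le> ff (real p) 2 * a' * (of_bool b * x'') / M^3 + ff (real p) 3 * a' * (of_bool (\<not> b) * a'') / M^4"
    using assms ff_of_nat_nonneg[of p] by auto
  ultimately show ?thesis
    by linarith
next
  case False
  then have p: "3 \<le> real p"
    by simp
  have c: "0 \<le> ff (real p - 2) 2"
    using assms(1) by (rule ff_2_shift_nonneg)
  have "min (real p * a' / M^2) (x' / M) * min (ff (real p - 2) 2 * a'' / M^2) ((real p - 2) * x'' / M)
      \<le> real p * a' / M^2 * min (ff (real p - 2) 2 * a'' / M^2) ((real p - 2) * x'' / M)"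
    using assms c p by (intro mult_right_mono) auto
  also have "\<dots> \<le> ff (real p) 2 * a' * (of_bool b * x'') / M^3 + ff (real p) 3 * a' * (of_bool (\<not> b) * a'') / M^4"
  proof (cases b)
    case True
    have "real p * a' / M^2 * min (ff (real p - 2) 2 * a'' / M^2) ((real p - 2) * x'' / M)
        \<le> real p * a' / M^2 * ((real p - 2) * x'' / M)"
      using assms by (intro mult_left_mono) auto
    also have "\<dots> = real p * (real p - 2) * (a' * x'' / M^3)"
      by (simp add: power2_eq_square power3_eq_cube)
    also have "\<dots> \<le> ff (real p) 2 * (a' * x'' / M^3)"
      using assms p by (intro mult_right_mono) (auto simp: ff_2)
    finally show ?thesis
      using True assms ff_of_nat_nonneg[of p 3] by simp
  next
    case False
    have "real p * a' / M^2 * min (ff (real p - 2) 2 * a'' / M^2) ((real p - 2) * x'' / M)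
        \<le> real p * a' / M^2 * (ff (real p - 2) 2 * a'' / M^2)"
      using assms by (intro mult_left_mono) auto
    also have "\<dots> = real p * ff (real p - 2) 2 * (a' * a'' / M^4)"
      using assms by (simp add: field_simps eval_nat_numeral)
    also have "\<dots> \<le> ff (real p) 3 * (a' * a'' / M^4)"
      using assms p mult_ff_2_shift_le_ff_3[of p] by (intro mult_right_mono) auto
    finally show ?thesis
      using False assms ff_of_nat_nonneg[of p 2] by (simp add: mult.assoc)
  qed
  finally show ?thesis .
qed

lemma U1_le:
  assumes "Mk 1 n d > 0"
  shows "U1 n d \<le> Mk 3 n d / Mk 1 n d"
proof -
  have "U1 n d \<le> (\<Sum>v\<in>{1..n}. ff (real (d v)) 3 / Mk 1 n d)"
    unfolding U1_def Let_def using assms by (intro sum_mono U1_summand_le)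
  then show ?thesis
    by (simp add: Mk_def sum_divide_distrib)
qed

lemma U2_nonneg: "0 \<le> U2 n d"
  unfolding U2_def Let_def using Mk_nonneg[of 1 n d] by (intro sum_nonneg) (auto simp: ff_of_nat_nonneg)

lemma U2_le:
  assumes "h \<le> n" "Mk 1 n d > 0"
  shows "U2 n d \<le> Hk 1 h d ^ 2 / Mk 1 n d + 2 * Mk 2 n d * Lk 2 h n d / Mk 1 n d ^ 2"
proof -
  define M where "M = Mk 1 n d"
  let ?x = "\<lambda>i. real (d i)" and ?a = "\<lambda>i. ff (real (d i)) 2" and ?H = "\<lambda>i. of_bool (i \<le> h)"
    and ?L = "\<lambda>i. of_bool (\<not> i \<le> h)"
  have "U2 n d \<le> (\<Sum>u\<in>{1..n}. \<Sum>v\<in>{1..n}. ?H u * ?x u * (?H v * ?x v) / M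
      + ?a u * (?L v * ?a v) / M^2 + ?L u * ?a u * ?a v / M^2)"
    unfolding U2_def Let_def M_def[symmetric]
    using assms ff_of_nat_nonneg
    by (intro sum_pairs_le_double_sum U2_summand_le add_nonneg_nonneg divide_nonneg_nonneg
        mult_nonneg_nonneg) (auto simp: M_def)
  also have "\<dots> = Hk 1 h d * Hk 1 h d / M + Mk 2 n d * Lk 2 h n d / M^2 + Lk 2 h n d * Mk 2 n d / M^2"
    using assms
    by (simp only: sum.distrib double_sum_product Hk_1_eq_sum_of_bool Lk_eq_sum_of_bool Mk_def)
  finally show ?thesis
    by (simp add: M_def power2_eq_square)
qed

lemma U3_le:
  assumes "h \<le> n" "Mk 1 n d > 0" "\<forall>i\<in>{1..n}. 1 \<le> d i"
  shows "U3 n d \<le> (Hk 1 h d ^ 2 / Mk 1 n d + 2 * Mk 2 n d * Lk 2 h n d / Mk 1 n d ^ 2) * Hk 1 h d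
    + Lk 3 h n d * (Mk 3 n d * Hk 1 h d / Mk 1 n d + Mk 4 n d * Lk 2 h n d / Mk 1 n d ^ 2) / Mk 1 n d ^ 2"
proof -
  define M where "M = Mk 1 n d"
  let ?x = "\<lambda>i. real (d i)" and ?a = "\<lambda>i. ff (real (d i)) 2" and ?b = "\<lambda>i. ff (real (d i)) 3"
    and ?c = "\<lambda>i. ff (real (d i)) 4" and ?H = "\<lambda>i. of_bool (i \<le> h)"
    and ?L = "\<lambda>i. of_bool (\<not> i \<le> h)"
  have "U3 n d \<le> (\<Sum>i\<in>{1..n}. \<Sum>j\<in>{1..n}. \<Sum>w\<in>{1..n}.
        ?H i * ?x i * (?H j * ?x j) * (?H w * ?x w) / M
      + ?a i * (?L j * ?a j) * (?H w * ?x w) / M^2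
      + ?L i * ?a i * ?a j * (?H w * ?x w) / M^2
      + ?b i * (?H j * ?x j) * (?L w * ?b w) / M^3
      + ?c i * (?L j * ?a j) * (?L w * ?b w) / M^4)"
    unfolding U3_def Let_def M_def[symmetric]
    using assms ff_of_nat_nonneg
    by (intro sum_pairs_le_double_sum sum_mono U3_summand_le sum_nonneg add_nonneg_nonneg
        divide_nonneg_nonneg mult_nonneg_nonneg) (auto simp: M_def)
  also have "\<dots> = Hk 1 h d * Hk 1 h d * Hk 1 h d / M + Mk 2 n d * Lk 2 h n d * Hk 1 h d / M^2
      + Lk 2 h n d * Mk 2 n d * Hk 1 h d / M^2 + Mk 3 n d * Hk 1 h d * Lk 3 h n d / M^3
      + Mk 4 n d * Lk 2 h n d * Lk 3 h n d / M^4"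
    using assms
    by (simp only: sum.distrib triple_sum_product Hk_1_eq_sum_of_bool Lk_eq_sum_of_bool Mk_def)
  also have "\<dots> = (Hk 1 h d ^ 2 / M + 2 * Mk 2 n d * Lk 2 h n d / M ^ 2) * Hk 1 h d
      + Lk 3 h n d * (Mk 3 n d * Hk 1 h d / M + Mk 4 n d * Lk 2 h n d / M ^ 2) / M ^ 2"
    using assms(2) unfolding M_def
    by (simp add: field_simps power2_eq_square power3_eq_cube power4_eq_xxxx)
  finally show ?thesis
    unfolding M_def .
qed

lemma U4_le:
  assumes "h \<le> n" "Mk 1 n d > 0"
  shows "U4 n d \<le> Mk 3 n d * Lk 2 h n d / Mk 1 n d ^ 2 + Mk 2 n d * Hk 1 h d / Mk 1 n d"
proof -
  define M where "M = Mk 1 n d"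
  have "U4 n d \<le> (\<Sum>i\<in>{1..n}. \<Sum>j\<in>{1..n}.
        ff (real (d i)) 3 * (of_bool (\<not> j \<le> h) * ff (real (d j)) 2) / M^2
      + ff (real (d i)) 2 * (of_bool (j \<le> h) * real (d j)) / M)"
    unfolding U4_def Let_def M_def[symmetric]
    using assms ff_of_nat_nonneg
    by (intro sum_pairs_le_double_sum U4_summand_le add_nonneg_nonneg divide_nonneg_nonneg
        mult_nonneg_nonneg) (auto simp: M_def)
  also have "\<dots> = Mk 3 n d * Lk 2 h n d / M^2 + Mk 2 n d * Hk 1 h d / M"
    using assms
    by (simp only: sum.distrib double_sum_product Hk_1_eq_sum_of_bool Lk_eq_sum_of_bool Mk_def)
  finally show ?thesis
    by (simp add: M_def)
qed

lemma U5_le: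
  assumes "h \<le> n" "Mk 1 n d > 0" "\<forall>i\<in>{1..n}. 1 \<le> d i"
  shows "U5 n d \<le> Mk 2 n d * (Mk 2 n d * Hk 1 h d / Mk 1 n d + Mk 3 n d * Lk 2 h n d / Mk 1 n d ^ 2)
    / Mk 1 n d ^ 2"
proof -
  define M where "M = Mk 1 n d"
  have "U5 n d \<le> (\<Sum>i\<in>{1..n}. \<Sum>j\<in>{1..n}. \<Sum>w\<in>{1..n}.
        ff (real (d i)) 2 * ff (real (d j)) 2 * (of_bool (w \<le> h) * real (d w)) / M^3
      + ff (real (d i)) 3 * ff (real (d j)) 2 * (of_bool (\<not> w \<le> h) * ff (real (d w)) 2) / M^4)"
    unfolding U5_def Let_def M_def[symmetric]
    using assms ff_of_nat_nonneg
    by (intro sum_pairs_le_double_sum sum_mono U5_summand_le sum_nonneg add_nonneg_nonneg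
        divide_nonneg_nonneg mult_nonneg_nonneg) (auto simp: M_def)
  also have "\<dots> = Mk 2 n d * Mk 2 n d * Hk 1 h d / M^3 + Mk 3 n d * Mk 2 n d * Lk 2 h n d / M^4"
    using assms
    by (simp only: sum.distrib triple_sum_product Hk_1_eq_sum_of_bool Lk_eq_sum_of_bool Mk_def)
  also have "\<dots> = Mk 2 n d * (Mk 2 n d * Hk 1 h d / M + Mk 3 n d * Lk 2 h n d / M ^ 2) / M ^ 2"
    using assms(2) unfolding M_def
    by (simp add: field_simps power2_eq_square power3_eq_cube power4_eq_xxxx)
  finally show ?thesis
    unfolding M_def .
qed

section \<open>A polynomial bound on \<open>\<xi>\<close>\<close>

text \<open>\<open>M\<^sub>1\<^sup>5\<close> times the bound on \<open>\<xi>\<close> that results from those on \<open>U\<^sub>1, \<dots>, U\<^sub>5\<close>, in the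
  variables \<open>m = M\<^sub>1\<close>, \<open>h\<^sub>k = H\<^sub>k\<close>, \<open>l\<^sub>k = L\<^sub>k\<close>; \<open>u / m\<^sup>2\<close> is the bound on \<open>U\<^sub>2\<close>.\<close>
definition xi_poly :: "real \<Rightarrow> real \<Rightarrow> real \<Rightarrow> real \<Rightarrow> real \<Rightarrow> real \<Rightarrow> real \<Rightarrow> real \<Rightarrow> real" where
  "xi_poly m h1 h2 h3 h4 l2 l3 l4 =
    (let m2 = h2 + l2; m3 = h3 + l3; m4 = h4 + l4; u = h1^2 * m + 2 * m2 * l2 in
      m2^2 * h1 * m^2 + m2 * m3 * l2 * m + m3 * m^3 + u^2 + u * h1 * m^2 + l3 * (m3 * h1 * m + m4 * l2)
      + (m3 * l2 * m + m2 * h1 * m^2) * m2 + u * m2^2 + m2 * m^3 + m3 * m2 * m^2 + m2^3 * m)"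

lemma xi_le_xi_poly:
  assumes "h \<le> n" "Mk 1 n d > 0" "\<forall>i\<in>{1..n}. 1 \<le> d i"
  shows "xi n d \<le> xi_poly (Mk 1 n d) (Hk 1 h d) (Hk 2 h d) (Hk 3 h d) (Hk 4 h d)
    (Lk 2 h n d) (Lk 3 h n d) (Lk 4 h n d) / Mk 1 n d ^ 5"
proof -
  define m where "m = Mk 1 n d"
  define m2 where "m2 = Mk 2 n d"
  define m3 where "m3 = Mk 3 n d"
  define m4 where "m4 = Mk 4 n d"
  define h1 where "h1 = Hk 1 h d"
  define l2 where "l2 = Lk 2 h n d"
  define l3 where "l3 = Lk 3 h n d"
  define u where "u = h1^2 * m + 2 * m2 * l2"
  have m: "m > 0" and m2: "0 \<le> m2"
    using assms(2) Mk_nonneg unfolding m_def m2_def by auto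
  have u: "u / m^2 = Hk 1 h d ^ 2 / Mk 1 n d + 2 * Mk 2 n d * Lk 2 h n d / Mk 1 n d ^ 2"
    using m unfolding u_def m_def m2_def h1_def l2_def by (simp add: field_simps power2_eq_square)
  have U2: "U2 n d \<le> u / m^2"
    unfolding u using U2_le[OF assms(1,2)] .
  have "xi n d = U5 n d + (U1 n d + U2 n d ^ 2 + U3 n d) / m + U4 n d * m2 / m^2
      + U2 n d * m2^2 / m^3 + m2 / m^2 + m3 * m2 / m^3 + m2^3 / m^4"
    unfolding xi_def Let_def m_def m2_def m3_def ..
  also have "\<dots> \<le> m2 * (m2 * h1 / m + m3 * l2 / m^2) / m^2
      + (m3 / m + (u / m^2)^2 + (u / m^2 * h1 + l3 * (m3 * h1 / m + m4 * l2 / m^2) / m^2)) / m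
      + (m3 * l2 / m^2 + m2 * h1 / m) * m2 / m^2
      + u / m^2 * m2^2 / m^3 + m2 / m^2 + m3 * m2 / m^3 + m2^3 / m^4"
  proof -
    have U3: "U3 n d \<le> u / m^2 * h1 + l3 * (m3 * h1 / m + m4 * l2 / m^2) / m^2"
      unfolding u using U3_le[OF assms] unfolding m_def m3_def m4_def h1_def l2_def l3_def .
    have "U2 n d ^ 2 \<le> (u / m^2)^2"
      using U2 U2_nonneg by (intro power_mono) auto
    then have "(U1 n d + U2 n d ^ 2 + U3 n d) / m
        \<le> (m3 / m + (u / m^2)^2 + (u / m^2 * h1 + l3 * (m3 * h1 / m + m4 * l2 / m^2) / m^2)) / m"
      using U1_le[OF assms(2)] U3 m unfolding m_def m3_def by (intro divide_right_mono add_mono) auto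
    moreover have "U4 n d * m2 / m^2 \<le> (m3 * l2 / m^2 + m2 * h1 / m) * m2 / m^2"
      using U4_le[OF assms(1,2)] m2 unfolding m_def m2_def m3_def h1_def l2_def
      by (intro divide_right_mono mult_right_mono) auto
    moreover have "U2 n d * m2^2 / m^3 \<le> u / m^2 * m2^2 / m^3"
      using U2 m by (intro divide_right_mono mult_right_mono) auto
    ultimately show ?thesis
      using U5_le[OF assms] unfolding m_def m2_def m3_def h1_def l2_def by linarith
  qed
  also have "\<dots> = xi_poly m h1 (Hk 2 h d) (Hk 3 h d) (Hk 4 h d) l2 l3 (Lk 4 h n d) / m^5"
    using m unfolding xi_poly_def Let_def u_def m2_def m3_def m4_def l2_def l3_def Hk_add_Lk
    by (simp add: field_simps eval_nat_numeral)
  finally show ?thesis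
    unfolding m_def h1_def l2_def l3_def .
qed

lemma xi_poly_mono:
  assumes "0 \<le> m" "0 \<le> h1" "0 \<le> h2" "0 \<le> h3" "0 \<le> h4" "0 \<le> l2" "0 \<le> l3" "0 \<le> l4"
    and "m \<le> m'" "h1 \<le> h1'" "h2 \<le> h2'" "h3 \<le> h3'" "h4 \<le> h4'" "l2 \<le> l2'" "l3 \<le> l3'" "l4 \<le> l4'"
  shows "xi_poly m h1 h2 h3 h4 l2 l3 l4 \<le> xi_poly m' h1' h2' h3' h4' l2' l3' l4'"
  unfolding xi_poly_def Let_def using assms
  by (intro add_mono mult_mono power_mono) (auto intro!: add_nonneg_nonneg mult_nonneg_nonneg)

lemma xi_poly_le_bounded:
  assumes "0 \<le> m" "0 \<le> h1" "0 \<le> h2" "0 \<le> h3" "0 \<le> h4" "0 \<le> l2" "0 \<le> l3" "0 \<le> l4"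
    and "m \<le> V" "h1 \<le> V" "h2 \<le> V" "h3 \<le> V" "h4 \<le> V" "l2 \<le> V" "l3 \<le> V" "l4 \<le> V"
    and "1 \<le> V"
  shows "xi_poly m h1 h2 h3 h4 l2 l3 l4 \<le> 86 * V^6"
proof -
  have "xi_poly m h1 h2 h3 h4 l2 l3 l4 \<le> xi_poly V V V V V V V V"
    using assms by (intro xi_poly_mono)
  also have "\<dots> = 2 * V^6 + 24 * V^5 + 58 * V^4 + 2 * V^3"
    by (simp add: xi_poly_def Let_def eval_nat_numeral algebra_simps)
  also have "\<dots> \<le> 2 * V^6 + 24 * V^6 + 58 * V^6 + 2 * V^6"
    using assms(17) by (intro add_mono mult_left_mono power_increasing) auto
  finally show ?thesis
    by simp
qed

lemma square_sum_le: "((x::real) + y)^2 \<le> 2 * x^2 + 2 * y^2"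
  using sum_squares_bound[of x y] by (simp add: power2_sum)

lemma xi_poly_le_large:
  fixes m s E h1 h2 h3 h4 l2 l3 l4 :: real
  assumes "m > 0" "0 \<le> s" "1 \<le> E"
    and "0 \<le> h1" "0 \<le> h2" "0 \<le> h3" "0 \<le> h4" "0 \<le> l2" "0 \<le> l3" "0 \<le> l4" "h1 \<le> m"
    and m_h2: "m \<le> E * h2" and m_m3: "m \<le> E * (h3 + l3)" and m_h1: "m * h1 \<le> E * (h3 + l3)"
    and h1_h2: "h1^2 * m \<le> E * h2^2" and s_h1: "s * h1 \<le> E * h2"
    and l3: "l3 \<le> E * s * l2" and l4: "l4 \<le> E * m * l2"
    and m2_sq: "(h2 + l2)^2 \<le> 3 * E * m * (h3 + l3)"
  shows "xi_poly m h1 h2 h3 h4 l2 l3 l4 \<le> 42 * E^2 * (h1 * h2^2 * m^2 + (h2 + l2) * (h3 + l3) * m^2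
    + l2 * (h2 + l2) * (h3 + l3) * m + l2 * l3 * h4)"
proof -
  define m2 where "m2 = h2 + l2"
  define m3 where "m3 = h3 + l3"
  define u where "u = h1^2 * m + 2 * m2 * l2"
  define P1 where "P1 = h1 * h2^2 * m^2"
  define P2 where "P2 = m2 * m3 * m^2"
  define P3 where "P3 = l2 * m2 * m3 * m"
  define P4 where "P4 = l2 * l3 * h4"
  note nonneg = assms(1-10)
  have m2: "0 \<le> m2" "h2 \<le> m2" "l2 \<le> m2" and m3: "0 \<le> m3" "l3 \<le> m3"
    using nonneg unfolding m2_def m3_def by auto
  have P: "0 \<le> P1" "0 \<le> P2" "0 \<le> P3" "0 \<le> P4"
    using nonneg m2 m3 unfolding P1_def P2_def P3_def P4_def by auto
  have "E * h2 \<le> E * m2"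
    using m2 assms(3) by (intro mult_left_mono) auto
  then have m_m2: "m \<le> E * m2"
    using m_h2 by linarith
  have m2_sq': "m2^2 \<le> 3 * E * m * m3"
    using m2_sq unfolding m2_def m3_def .
  have T1: "m2^2 * h1 * m^2 \<le> 2 * P1 + 2 * E * P3"
  proof -
    have "m2^2 * h1 * m^2 \<le> (2 * h2^2 + 2 * l2^2) * (h1 * m^2)"
      unfolding m2_def mult.assoc using square_sum_le nonneg by (intro mult_right_mono) auto
    also have "\<dots> = 2 * P1 + 2 * ((l2 * l2 * m) * (m * h1))"
      unfolding P1_def by (simp add: power2_eq_square algebra_simps)
    also have "(l2 * l2 * m) * (m * h1) \<le> (l2 * m2 * m) * (E * m3)"
    proof (rule mult_mono)
      show "l2 * l2 * m \<le> l2 * m2 * m"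
        using m2 nonneg by (intro mult_right_mono mult_left_mono) auto
    qed (use m2 m_h1 nonneg in \<open>auto simp: m3_def\<close>)
    finally show ?thesis
      unfolding P3_def by (simp add: algebra_simps)
  qed
  have T3: "m3 * m^3 \<le> E * P2"
    using mult_left_mono[OF m_m2, of "m3 * m^2"] m3 nonneg unfolding P2_def
    by (simp add: power3_eq_cube power2_eq_square algebra_simps)
  have m2_l2: "m2^2 * (l2 * m2) \<le> 3 * E * P3"
    using mult_right_mono[OF m2_sq', of "l2 * m2"] nonneg m2 unfolding P3_def
    by (simp add: algebra_simps)
  have h1_cube: "h1^2 * m * (h1 * m^2) \<le> E * P1"
    using mult_right_mono[OF h1_h2, of "h1 * m^2"] nonneg unfolding P1_def by (simp add: algebra_simps)
  have T4: "u^2 \<le> 2 * E * P1 + 24 * E * P3"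
  proof -
    have "u^2 \<le> 2 * (h1^2 * m)^2 + 2 * (2 * m2 * l2)^2"
      unfolding u_def by (rule square_sum_le)
    also have "(h1^2 * m)^2 \<le> h1^2 * m * (h1 * m^2)"
    proof -
      have "h1 * m \<le> m * m"
        using nonneg assms(11) by (intro mult_right_mono) auto
      then have "h1^2 * m \<le> h1 * m^2"
        using nonneg mult_left_mono[of "h1 * m" "m * m" h1] by (simp add: power2_eq_square mult.assoc)
      then have "h1^2 * m * (h1^2 * m) \<le> h1^2 * m * (h1 * m^2)"
        using nonneg by (intro mult_left_mono) auto
      then show ?thesis
        by (simp add: power2_eq_square)
    qed
    also have "(2 * m2 * l2)^2 = 4 * (m2^2 * (l2 * l2))"
      by (simp add: power2_eq_square algebra_simps)
    also have "m2^2 * (l2 * l2) \<le> m2^2 * (l2 * m2)"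
      using m2 nonneg by (intro mult_left_mono) auto
    finally show ?thesis
      using h1_cube m2_l2 by linarith
  qed
  have T5: "u * h1 * m^2 \<le> E * P1 + 2 * E * P3"
  proof -
    have "u * h1 * m^2 = h1^2 * m * (h1 * m^2) + 2 * ((m2 * l2 * m) * (m * h1))"
      unfolding u_def by (simp add: power2_eq_square algebra_simps)
    moreover have "(m2 * l2 * m) * (m * h1) \<le> (m2 * l2 * m) * (E * m3)"
      using m_h1 m2 nonneg unfolding m3_def by (intro mult_left_mono) auto
    ultimately show ?thesis
      using h1_cube unfolding P3_def by (simp add: algebra_simps)
  qed
  have T6: "l3 * (m3 * h1 * m + (h4 + l4) * l2) \<le> E^2 * P3 + E * P3 + P4"
  proof -
    have "l3 * m3 * m * h1 \<le> E * s * l2 * m3 * m * h1"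
      using l3 m3 nonneg by (intro mult_right_mono) auto
    also have "\<dots> = E * l2 * m3 * m * (s * h1)"
      by (simp add: algebra_simps)
    also have "\<dots> \<le> E * l2 * m3 * m * (E * h2)"
      using s_h1 m3 nonneg assms(3) by (intro mult_left_mono) auto
    also have "\<dots> = E^2 * (h2 * (l2 * m3 * m))"
      by (simp add: power2_eq_square algebra_simps)
    also have "\<dots> \<le> E^2 * (m2 * (l2 * m3 * m))"
      using m2 m3 nonneg by (intro mult_left_mono mult_right_mono) auto
    also have "\<dots> = E^2 * P3"
      unfolding P3_def by (simp add: algebra_simps)
    finally have a: "l3 * m3 * m * h1 \<le> E^2 * P3" .
    have "l3 * l4 * l2 \<le> l3 * (E * m * l2) * l2"
      using l4 nonneg by (intro mult_right_mono mult_left_mono) auto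
    also have "\<dots> \<le> m3 * (E * m * l2) * m2"
      using m2 m3 nonneg assms(3) by (intro mult_mono) auto
    finally have b: "l3 * l4 * l2 \<le> E * P3"
      unfolding P3_def by (simp add: algebra_simps)
    show ?thesis
      using a b unfolding P4_def by (simp add: algebra_simps)
  qed
  have T8: "u * m2^2 \<le> 2 * P1 + 8 * E * P3"
  proof -
    have "h1^2 * m * m2^2 \<le> m2^2 * h1 * m^2"
      using nonneg assms(11) m2 by (simp add: power2_eq_square mult_left_mono mult_right_mono algebra_simps)
    moreover have "u * m2^2 = h1^2 * m * m2^2 + 2 * (m2^2 * (l2 * m2))"
      unfolding u_def by (simp add: power2_eq_square algebra_simps)
    ultimately show ?thesis
      using T1 m2_l2 by linarith
  qed
  have T9: "m2 * m^3 \<le> E * P2"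
    using mult_left_mono[OF m_m3, of "m2 * m^2"] m2 nonneg unfolding P2_def m3_def
    by (simp add: power3_eq_cube power2_eq_square algebra_simps)
  have T11: "m2^3 * m \<le> 3 * E * P2"
    using mult_right_mono[OF m2_sq', of "m2 * m"] m2 nonneg unfolding P2_def
    by (simp add: power3_eq_cube power2_eq_square algebra_simps)
  have "xi_poly m h1 h2 h3 h4 l2 l3 l4 = m2^2 * h1 * m^2 + P3 + m3 * m^3 + u^2 + u * h1 * m^2
      + l3 * (m3 * h1 * m + (h4 + l4) * l2) + (P3 + m2^2 * h1 * m^2) + u * m2^2 + m2 * m^3 + P2 + m2^3 * m"
    unfolding xi_poly_def Let_def m2_def[symmetric] m3_def[symmetric] u_def[symmetric]
    by (simp add: P2_def P3_def power2_eq_square algebra_simps)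
  also have "\<dots> \<le> (6 + 3 * E) * P1 + (1 + 5 * E) * P2 + (2 + 39 * E + E^2) * P3 + P4"
    using T1 T3 T4 T5 T6 T8 T9 T11 by (simp only: distrib_right)
  also have "\<dots> \<le> 42 * E^2 * P1 + 42 * E^2 * P2 + 42 * E^2 * P3 + 42 * E^2 * P4"
  proof -
    have "E * 1 \<le> E * E"
      using assms(3) by (intro mult_left_mono) auto
    then have "E \<le> E^2"
      by (simp add: power2_eq_square)
    moreover have "1 \<le> E^2"
      using calculation assms(3) by linarith
    moreover have "P4 \<le> 42 * E^2 * P4"
      using mult_right_mono[of 1 "42 * E^2" P4] calculation P by simp
    ultimately show ?thesis
      using P assms(3) by (intro add_mono mult_right_mono) auto
  qed
  also have "\<dots> = 42 * E^2 * (P1 + P2 + P3 + P4)"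
    by (simp only: distrib_left)
  finally show ?thesis
    unfolding P1_def P2_def P3_def P4_def m2_def m3_def .
qed

section \<open>The two regimes \<open>c\<^sub>1 \<surd>M\<^sub>1 \<ge> 4\<close> and \<open>c\<^sub>1 \<surd>M\<^sub>1 < 4\<close>\<close>

definition xi_rate :: "nat \<Rightarrow> nat \<Rightarrow> (nat \<Rightarrow> nat) \<Rightarrow> real" where
  "xi_rate n h d = (Hk 1 h d * Hk 2 h d ^ 2 + Mk 2 n d * Mk 3 n d) / Mk 1 n d ^ 3
    + Lk 2 h n d * Mk 2 n d * Mk 3 n d / Mk 1 n d ^ 4 + Lk 2 h n d * Lk 3 h n d * Hk 4 h d / Mk 1 n d ^ 5"

lemma xi_rate_eq:
  assumes "Mk 1 n d > 0"
  shows "xi_rate n h d = (Hk 1 h d * Hk 2 h d ^ 2 * Mk 1 n d ^ 2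
      + (Hk 2 h d + Lk 2 h n d) * (Hk 3 h d + Lk 3 h n d) * Mk 1 n d ^ 2
      + Lk 2 h n d * (Hk 2 h d + Lk 2 h n d) * (Hk 3 h d + Lk 3 h n d) * Mk 1 n d
      + Lk 2 h n d * Lk 3 h n d * Hk 4 h d) / Mk 1 n d ^ 5"
  using assms unfolding xi_rate_def Hk_add_Lk by (simp add: field_simps eval_nat_numeral)

lemma xi_rate_ge:
  assumes "h \<le> n" "Mk 1 n d > 0"
  shows "Hk 1 h d * Hk 2 h d ^ 2 / Mk 1 n d ^ 3 \<le> xi_rate n h d"
  unfolding xi_rate_def add_divide_distrib
  using assms Hk_nonneg Lk_nonneg Mk_nonneg by (simp add: add_increasing2)

lemma xi_rate_nonneg: "h \<le> n \<Longrightarrow> 0 \<le> xi_rate n h d"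
  unfolding xi_rate_def using Hk_nonneg Lk_nonneg Mk_nonneg by simp

text \<open>The hypotheses are the degree bounds of the regime \<open>c\<^sub>1 \<surd>M\<^sub>1 \<ge> 4\<close>
  (\<open>large_regime_moment_bounds\<close>) with all constants replaced by a single \<open>Q \<ge> 1\<close>.\<close>
lemma scaled_chain_bounds:
  fixes s Q h1 h2 h3 :: real
  assumes "1 \<le> s" "1 \<le> Q" "0 \<le> h2"
    and s_h1: "s \<le> Q * h1" and h1_h2: "s * h1 \<le> Q * h2" and h2_h3: "s * h2 \<le> Q * h3"
  shows "s * s \<le> Q^2 * h2" "s * s * h1 \<le> Q^2 * h3" "s * s * s \<le> Q^3 * h3" "h2 \<le> Q * h3"
proof -
  have "s * s \<le> Q * h1 * s"
    using s_h1 assms(1) by (intro mult_right_mono) auto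
  also have "\<dots> \<le> Q * (Q * h2)"
    using mult_left_mono[OF h1_h2, of Q] assms(2) by (simp add: mult_ac)
  finally show ss: "s * s \<le> Q^2 * h2"
    by (simp add: power2_eq_square mult.assoc)
  have "s * s * h1 \<le> s * (Q * h2)"
    using h1_h2 assms(1) by (simp add: mult.assoc mult_left_mono)
  also have "\<dots> \<le> Q * (Q * h3)"
    using h2_h3 assms(2) by (simp add: mult.left_commute mult_left_mono)
  finally show "s * s * h1 \<le> Q^2 * h3"
    by (simp add: power2_eq_square mult.assoc)
  have "s * s * s \<le> Q^2 * h2 * s"
    using ss assms(1) by (intro mult_right_mono) auto
  also have "\<dots> \<le> Q^2 * (Q * h3)"
    using mult_left_mono[OF h2_h3, of "Q^2"] by (simp add: mult_ac)
  finally show "s * s * s \<le> Q^3 * h3"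
    by (simp add: power2_eq_square power3_eq_cube mult.assoc)
  show "h2 \<le> Q * h3"
    using h2_h3 mult_right_mono[OF assms(1,3)] by simp
qed

lemma large_regime_consequences:
  fixes m s Q h1 h2 h3 l2 l3 :: real
  assumes "1 \<le> s" "s^2 = m" "1 \<le> Q" "0 \<le> h1" "0 \<le> h2" "0 \<le> l3"
    and s_h1: "s \<le> Q * h1" and h1_h2: "s * h1 \<le> Q * h2" and h2_h3: "s * h2 \<le> Q * h3"
    and l2: "l2 \<le> Q * s * m"
    and CS: "(h2 + l2)^2 \<le> m * ((h3 + l3) + (h2 + l2))"
  shows "m \<le> Q^4 * h2" "m \<le> Q^4 * (h3 + l3)" "m * h1 \<le> Q^4 * (h3 + l3)"
    "h1^2 * m \<le> Q^4 * h2^2" "(h2 + l2)^2 \<le> 3 * Q^4 * m * (h3 + l3)"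
proof -
  note chain = scaled_chain_bounds[OF assms(1,3,5) s_h1 h1_h2 h2_h3]
  have m: "m = s * s"
    using assms(2) by (simp add: power2_eq_square)
  have "0 \<le> Q * h3"
    using chain(4) assms(5) by linarith
  then have h3: "0 \<le> h3"
    using assms(3) by (simp add: zero_le_mult_iff)
  have Q4: "Q^k * x \<le> Q^4 * (x + y)" if "k \<le> 4" "0 \<le> x" "0 \<le> y" for k x y
  proof -
    have "Q^k * x \<le> Q^4 * x"
      using that assms(3) by (intro mult_right_mono power_increasing) auto
    also have "\<dots> \<le> Q^4 * (x + y)"
      using assms(3) that(3) by (intro mult_left_mono) auto
    finally show ?thesis .
  qed
  show "m \<le> Q^4 * h2"
    using chain(1) Q4[of 2 h2 0] assms(5) unfolding m by simp
  have "s * s \<le> s * s * s"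
    using assms(1) by (simp add: mult_le_cancel_left1)
  then show "m \<le> Q^4 * (h3 + l3)"
    using chain(3) Q4[of 3 h3 l3] h3 assms(6) unfolding m by simp
  show "m * h1 \<le> Q^4 * (h3 + l3)"
    using chain(2) Q4[of 2 h3 l3] h3 assms(6) unfolding m by simp
  have "h1^2 * m = (s * h1)^2"
    unfolding m by (simp add: power2_eq_square mult_ac)
  also have "\<dots> \<le> (Q * h2)^2"
    using h1_h2 assms(1,4) by (intro power_mono) auto
  also have "\<dots> \<le> Q^4 * h2^2"
    using Q4[of 2 "h2^2" 0] by (simp add: power_mult_distrib)
  finally show "h1^2 * m \<le> Q^4 * h2^2" .
  have "Q * (s * m) \<le> Q * (Q^3 * h3)"
    using chain(3) assms(3) unfolding m by (intro mult_left_mono) (auto simp: mult.assoc)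
  then have "l2 \<le> Q^4 * h3"
    using l2 by (simp add: power_numeral_reduce mult.assoc)
  moreover have "h2 \<le> Q^4 * (h3 + l3)" "Q^4 * h3 \<le> Q^4 * (h3 + l3)"
    using chain(4) Q4[of 1 h3 l3] Q4[of 4 h3 l3] h3 assms(6) by simp_all
  ultimately have m2: "h2 + l2 \<le> 2 * Q^4 * (h3 + l3)"
    by linarith
  have "h3 + l3 \<le> Q^4 * (h3 + l3)"
    using Q4[of 0 "h3 + l3" 0] h3 assms(6) by simp
  with m2 have "(h3 + l3) + (h2 + l2) \<le> 3 * Q^4 * (h3 + l3)"
    by linarith
  then have "m * ((h3 + l3) + (h2 + l2)) \<le> m * (3 * Q^4 * (h3 + l3))"
    unfolding m by (intro mult_left_mono) auto
  with CS show "(h2 + l2)^2 \<le> 3 * Q^4 * m * (h3 + l3)"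
    by (simp add: mult_ac)
qed

lemma large_regime_moment_bounds:
  fixes s b :: real
  assumes adm: "admissible c1 c2 n h d" and s: "s = sqrt (Mk 1 n d)"
    and large: "4 \<le> c1 * s" and b: "0 \<le> b" "c2 \<le> b"
  shows "c1 * s \<le> Hk 1 h d" "3/4 * c1 * s * Hk 1 h d \<le> Hk 2 h d" "c1 / 2 * s * Hk 2 h d \<le> Hk 3 h d"
    "Lk 2 h n d \<le> b * s * Mk 1 n d" "Lk 3 h n d \<le> b * s * Lk 2 h n d"
    "Lk 4 h n d \<le> b^2 * Mk 1 n d * Lk 2 h n d"
proof -
  note A = admissibleD[OF adm]
  have hn: "h \<le> n"
    using A(2) by simp
  have s0: "0 \<le> s"
    unfolding s by (rule real_sqrt_ge_zero[OF Mk_nonneg])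
  have high: "4 \<le> real (d i)" "c1 * s \<le> real (d i)" if "i \<in> {1..h}" for i
    using A(5)[OF that] large s by auto
  have low: "real (d i) \<le> b * s" if "i \<in> {Suc h..n}" for i
    using A(6)[OF that] mult_right_mono[OF b(2) s0] s by simp
  have "c1 * s \<le> ff (real (d h)) 1"
    using high[of h] A(1) by simp
  also have "\<dots> \<le> Hk 1 h d"
    unfolding Hk_def using A(1) by (intro member_le_sum) (auto simp: ff_of_nat_nonneg)
  finally show "c1 * s \<le> Hk 1 h d" .
  have "3/4 * c1 * s * real (d i) \<le> ff (real (d i)) 2" if "i \<in> {1..h}" for i
    using ff_2_ge[OF high[OF that]] by (simp add: mult.assoc)
  then show "3/4 * c1 * s * Hk 1 h d \<le> Hk 2 h d"
    unfolding Hk_def sum_distrib_left ff_1 by (intro sum_mono)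
  have "c1 / 2 * s * ff (real (d i)) 2 \<le> ff (real (d i)) 3" if "i \<in> {1..h}" for i
    using ff_3_ge[OF high[OF that]] by (simp add: mult.assoc)
  then show "c1 / 2 * s * Hk 2 h d \<le> Hk 3 h d"
    unfolding Hk_def sum_distrib_left by (intro sum_mono)
  have "Lk 2 h n d \<le> b * s * Lk 1 h n d"
    unfolding Lk_eq_sum[OF hn] sum_distrib_left ff_1 using low by (intro sum_mono ff_2_le) auto
  also have "\<dots> \<le> b * s * Mk 1 n d"
    using b s0 Hk_nonneg[of 1 h d] by (intro mult_left_mono) (auto simp: Lk_def)
  finally show "Lk 2 h n d \<le> b * s * Mk 1 n d" .
  show "Lk 3 h n d \<le> b * s * Lk 2 h n d"
    unfolding Lk_eq_sum[OF hn] sum_distrib_left using low by (intro sum_mono ff_3_le) auto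
  have b2: "b^2 * Mk 1 n d = (b * s)^2"
    unfolding s power_mult_distrib real_sqrt_pow2[OF Mk_nonneg] ..
  show "Lk 4 h n d \<le> b^2 * Mk 1 n d * Lk 2 h n d"
    unfolding b2 Lk_eq_sum[OF hn] sum_distrib_left using low by (intro sum_mono ff_4_le) auto
qed

lemma le_mult_if_scaled_le:
  fixes a x y Q :: real
  assumes "0 < a" "a * x \<le> y" "0 \<le> y" "1 / a \<le> Q"
  shows "x \<le> Q * y"
proof -
  have "x \<le> 1 / a * y"
    using assms(1,2) by (simp add: field_simps mult.commute)
  also have "\<dots> \<le> Q * y"
    using mult_right_mono[OF assms(4,3)] .
  finally show ?thesis .
qed

lemma large_regime_scaled_bounds:
  assumes adm: "admissible c1 c2 n h d" and large: "4 \<le> c1 * sqrt (Mk 1 n d)"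
    and Q: "Q = 1 + 2 / c1 + \<bar>c2\<bar> + c2^2" and s: "s = sqrt (Mk 1 n d)"
  shows "1 \<le> Q" "s \<le> Q * Hk 1 h d" "s * Hk 1 h d \<le> Q * Hk 2 h d" "s * Hk 2 h d \<le> Q * Hk 3 h d"
    "Lk 2 h n d \<le> Q * s * Mk 1 n d" "Lk 3 h n d \<le> Q * s * Lk 2 h n d"
    "Lk 4 h n d \<le> Q * Mk 1 n d * Lk 2 h n d"
proof -
  note A = admissibleD[OF adm]
  have s0: "0 \<le> s" and "0 \<le> Mk 1 n d"
    using s Mk_nonneg by auto
  have c1: "0 < c1"
  proof (rule ccontr)
    assume "\<not> 0 < c1"
    then have "c1 * s \<le> 0"
      using s0 by (simp add: mult_nonpos_nonneg)
    then show False
      using large s by simp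
  qed
  have Q_ge: "1 \<le> Q" "1 / c1 \<le> Q" "4 / (3 * c1) \<le> Q" "2 / c1 \<le> Q" "\<bar>c2\<bar> \<le> Q" "\<bar>c2\<bar>^2 \<le> Q"
    using c1 unfolding Q by (auto simp: field_simps)
  then show "1 \<le> Q"
    by simp
  note D = large_regime_moment_bounds[OF adm s large[folded s] abs_ge_zero abs_ge_self]
  have H: "0 \<le> Hk k h d" and L: "0 \<le> Lk k h n d" for k
    using Hk_nonneg Lk_nonneg A(2) by auto
  show "s \<le> Q * Hk 1 h d"
    using D(1) c1 Q_ge(2) H by (intro le_mult_if_scaled_le[of c1]) auto
  show "s * Hk 1 h d \<le> Q * Hk 2 h d"
    using D(2) c1 Q_ge(3) H by (intro le_mult_if_scaled_le[of "3/4 * c1"]) (auto simp: mult.assoc)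
  show "s * Hk 2 h d \<le> Q * Hk 3 h d"
    using D(3) c1 Q_ge(4) H by (intro le_mult_if_scaled_le[of "c1 / 2"]) (auto simp: mult.assoc)
  have "\<bar>c2\<bar> * (s * Mk 1 n d) \<le> Q * (s * Mk 1 n d)"
    using Q_ge(5) s0 \<open>0 \<le> Mk 1 n d\<close> by (intro mult_right_mono) auto
  then show "Lk 2 h n d \<le> Q * s * Mk 1 n d"
    using D(4) by (simp add: mult.assoc)
  have "\<bar>c2\<bar> * (s * Lk 2 h n d) \<le> Q * (s * Lk 2 h n d)"
    using Q_ge(5) s0 L by (intro mult_right_mono) auto
  then show "Lk 3 h n d \<le> Q * s * Lk 2 h n d"
    using D(5) by (simp add: mult.assoc)
  have "\<bar>c2\<bar>^2 * (Mk 1 n d * Lk 2 h n d) \<le> Q * (Mk 1 n d * Lk 2 h n d)"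
    using Q_ge(6) L \<open>0 \<le> Mk 1 n d\<close> by (intro mult_right_mono) auto
  then show "Lk 4 h n d \<le> Q * Mk 1 n d * Lk 2 h n d"
    using D(6) by (simp add: mult.assoc)
qed

lemma xi_le_large:
  assumes adm: "admissible c1 c2 n h d" and large: "4 \<le> c1 * sqrt (Mk 1 n d)"
  shows "xi n d \<le> 42 * (1 + 2 / c1 + \<bar>c2\<bar> + c2^2)^8 * xi_rate n h d"
proof -
  define Q where "Q = 1 + 2 / c1 + \<bar>c2\<bar> + c2^2"
  define m where "m = Mk 1 n d"
  define s where "s = sqrt m"
  note A = admissibleD[OF adm]
  note B = large_regime_scaled_bounds[OF adm large Q_def s_def[unfolded m_def], folded m_def]
  have m: "2 \<le> m" and s: "1 \<le> s" "s^2 = m"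
    using A(4) unfolding s_def m_def by (auto simp: real_le_rsqrt)
  have Q4: "Q \<le> Q^4" "1 \<le> Q^4"
    using B(1) power_increasing[of 1 4 Q] by (auto intro: one_le_power)
  have H: "0 \<le> Hk k h d" and L: "0 \<le> Lk k h n d" for k
    using Hk_nonneg Lk_nonneg A(2) by auto
  have "(Hk 2 h d + Lk 2 h n d)^2 \<le> m * ((Hk 3 h d + Lk 3 h n d) + (Hk 2 h d + Lk 2 h n d))"
    using M2_squared_le unfolding m_def Hk_add_Lk by (simp add: add.commute)
  note C = large_regime_consequences[OF s B(1) H H L B(2-5) this]
  have "xi n d \<le> xi_poly m (Hk 1 h d) (Hk 2 h d) (Hk 3 h d) (Hk 4 h d) (Lk 2 h n d) (Lk 3 h n d)
      (Lk 4 h n d) / m^5"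
    using xi_le_xi_poly[OF _ _ A(3), of h] A(2) m unfolding m_def by simp
  also have "\<dots> \<le> 42 * (Q^4)^2 * (Hk 1 h d * Hk 2 h d ^ 2 * m^2
      + (Hk 2 h d + Lk 2 h n d) * (Hk 3 h d + Lk 3 h n d) * m^2
      + Lk 2 h n d * (Hk 2 h d + Lk 2 h n d) * (Hk 3 h d + Lk 3 h n d) * m
      + Lk 2 h n d * Lk 3 h n d * Hk 4 h d) / m^5"
  proof (intro divide_right_mono xi_poly_le_large)
    show "s * Hk 1 h d \<le> Q^4 * Hk 2 h d"
      using B(3) mult_right_mono[OF Q4(1) H[of 2]] by simp
    have "Q * (s * Lk 2 h n d) \<le> Q^4 * (s * Lk 2 h n d)"
      using Q4 s L by (intro mult_right_mono) auto
    then show "Lk 3 h n d \<le> Q^4 * s * Lk 2 h n d"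
      using B(6) by (simp add: mult.assoc)
    have "Q * (m * Lk 2 h n d) \<le> Q^4 * (m * Lk 2 h n d)"
      using Q4 m L by (intro mult_right_mono) auto
    then show "Lk 4 h n d \<le> Q^4 * m * Lk 2 h n d"
      using B(7) by (simp add: mult.assoc)
    show "Hk 1 h d \<le> m"
      using Hk_add_Lk[of 1 h d n] L[of 1] unfolding m_def by simp
  qed (use C H L m s Q4 in auto)
  also have "\<dots> = 42 * Q^8 * xi_rate n h d"
    using xi_rate_eq[of n d h] m unfolding m_def by (simp add: power_mult[symmetric])
  finally show ?thesis
    unfolding Q_def .
qed

lemma Hk_Lk_le_M1_power:
  assumes "h \<le> n"
  shows "Hk (Suc k) h d \<le> Mk 1 n d ^ Suc k" "Lk (Suc k) h n d \<le> Mk 1 n d ^ Suc k"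
  using Mk_le_M1_power[of k n d] Hk_add_Lk[of "Suc k" h d n] Hk_nonneg[of "Suc k" h d]
    Lk_nonneg[OF assms, of "Suc k" d] by linarith+

lemma H1_H2_ge_2:
  assumes "1 \<le> h" "2 \<le> d 1"
  shows "2 \<le> Hk 1 h d" "2 \<le> Hk 2 h d"
proof -
  have H: "ff (real (d 1)) k \<le> Hk k h d" for k
    unfolding Hk_def using assms(1) by (intro member_le_sum) (auto simp: ff_of_nat_nonneg)
  have "2 \<le> ff (real (d 1)) 2"
    using assms(2) mult_mono[of 2 "real (d 1)" 1 "real (d 1) - 1"] by (simp add: ff_2)
  then show "2 \<le> Hk 1 h d" "2 \<le> Hk 2 h d"
    using assms(2) H[of 1] H[of 2] by auto
qed

lemma xi_le_small:
  assumes adm: "admissible c1 c2 n h d" and c1: "0 < c1"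
    and small: "c1 * sqrt (Mk 1 n d) < 4" and d1: "2 \<le> d 1"
  shows "xi n d \<le> 3 * (16 / c1^2)^24 * xi_rate n h d"
proof -
  define m where "m = Mk 1 n d"
  define N where "N = 16 / c1^2"
  define P where "P = xi_poly m (Hk 1 h d) (Hk 2 h d) (Hk 3 h d) (Hk 4 h d) (Lk 2 h n d) (Lk 3 h n d) (Lk 4 h n d)"
  note A = admissibleD[OF adm]
  have m: "2 \<le> m"
    using A(4) unfolding m_def .
  have "(c1 * sqrt m)^2 \<le> 4^2"
    using small c1 m unfolding m_def by (intro power_mono) auto
  then have "c1^2 * m \<le> 16"
    using m by (simp add: power_mult_distrib)
  then have mN: "m \<le> N"
    unfolding N_def using c1 by (simp add: field_simps)
  have pw: "m^k \<le> N^4" if "1 \<le> k" "k \<le> 4" for k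
  proof -
    have "m^k \<le> N^k"
      using m mN by (intro power_mono) auto
    also have "\<dots> \<le> N^4"
      using m mN that by (intro power_increasing) auto
    finally show ?thesis .
  qed
  have HL: "Hk k h d \<le> N^4" "Lk k h n d \<le> N^4" if "1 \<le> k" "k \<le> 4" for k
    using that Hk_Lk_le_M1_power[OF less_imp_le[OF A(2)], of "k - 1" d] pw[OF that]
    unfolding m_def by simp_all
  have "1 \<le> N^4"
    using m mN by (simp add: one_le_power)
  then have "P \<le> 86 * (N^4)^6"
    unfolding P_def using HL[of 1] HL[of 2] HL[of 3] HL[of 4] pw[of 1] m A(2)
    by (intro xi_poly_le_bounded) (auto simp: Hk_nonneg Lk_nonneg)
  moreover have "2 * 2^2 * 2^2 \<le> Hk 1 h d * Hk 2 h d ^ 2 * m^2"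
    using H1_H2_ge_2[of h d, OF A(1) d1] m by (intro mult_mono power_mono) auto
  then have "N^24 * 32 \<le> N^24 * (Hk 1 h d * Hk 2 h d ^ 2 * m^2)"
    using m mN by (intro mult_left_mono) auto
  moreover have "0 \<le> N^24" "(N^4)^6 = N^24"
    using m mN by (simp_all flip: power_mult)
  ultimately have "P \<le> 3 * (N^24 * (Hk 1 h d * Hk 2 h d ^ 2 * m^2))"
    by linarith
  then have "P / m^5 \<le> 3 * (N^24 * (Hk 1 h d * Hk 2 h d ^ 2 * m^2)) / m^5"
    using m by (intro divide_right_mono) auto
  then have "xi n d \<le> 3 * (N^24 * (Hk 1 h d * Hk 2 h d ^ 2 * m^2)) / m^5"
    using xi_le_xi_poly[OF _ _ A(3), of h] A(2) m unfolding P_def m_def by simp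
  also have "\<dots> = 3 * N^24 * (Hk 1 h d * Hk 2 h d ^ 2 / m^3)"
    using m by (simp add: field_simps eval_nat_numeral)
  also have "\<dots> \<le> 3 * N^24 * xi_rate n h d"
    using xi_rate_ge[of h n d] A(2) m unfolding m_def by (intro mult_left_mono) auto
  finally show ?thesis
    unfolding N_def .
qed

lemma xi_eq_0_if_degrees_1:
  assumes "\<forall>i\<in>{1..n}. d i = 1"
  shows "xi n d = 0"
proof -
  have ff: "ff 1 2 = 0" "ff 1 3 = 0"
    by (simp_all add: ff_2 ff_3)
  have "Mk 2 n d = 0" "Mk 3 n d = 0"
    unfolding Mk_def using assms by (auto simp: ff)
  moreover have "U1 n d = 0" "U2 n d = 0" "U3 n d = 0" "U4 n d = 0" "U5 n d = 0"
    unfolding U1_def U2_def U3_def U4_def U5_def Let_def using assms Mk_nonneg[of 1 n d]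
    by (auto intro!: sum.neutral simp: ff)
  ultimately show ?thesis
    unfolding xi_def Let_def by simp
qed

lemma xi_le_const_mult_xi_rate:
  assumes c1: "0 < c1"
  shows "\<exists>C\<ge>0. \<forall>n h d. admissible c1 c2 n h d \<longrightarrow> xi n d \<le> C * xi_rate n h d"
proof (intro exI conjI allI impI)
  define C where "C = max (42 * (1 + 2 / c1 + \<bar>c2\<bar> + c2^2)^8) (3 * (16 / c1^2)^24)"
  show C0: "0 \<le> C"
    unfolding C_def by (simp add: le_max_iff_disj)
  fix n h d
  assume adm: "admissible c1 c2 n h d"
  note A = admissibleD[OF adm]
  have rate: "0 \<le> xi_rate n h d"
    using A(2) by (intro xi_rate_nonneg) simp
  consider "d 1 = 1" | "2 \<le> d 1" "4 \<le> c1 * sqrt (Mk 1 n d)" | "2 \<le> d 1" "c1 * sqrt (Mk 1 n d) < 4"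
    using A(1,2,3) by force
  then show "xi n d \<le> C * xi_rate n h d"
  proof cases
    case 1
    have "d i = 1" if "i \<in> {1..n}" for i
    proof -
      have "d i \<le> d 1"
        using adm that unfolding admissible_def by auto
      then show ?thesis
        using A(3) that 1 by force
    qed
    then have "xi n d = 0"
      by (intro xi_eq_0_if_degrees_1) auto
    then show ?thesis
      using rate C0 by simp
  next
    case 2
    then have "xi n d \<le> 42 * (1 + 2 / c1 + \<bar>c2\<bar> + c2^2)^8 * xi_rate n h d"
      by (intro xi_le_large[OF adm])
    also have "\<dots> \<le> C * xi_rate n h d"
      unfolding C_def using rate by (intro mult_right_mono) auto
    finally show ?thesis .
  next
    case 3
    then have "xi n d \<le> 3 * (16 / c1^2)^24 * xi_rate n h d"
      by (intro xi_le_small[OF adm c1])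
    also have "\<dots> \<le> C * xi_rate n h d"
      unfolding C_def using rate by (intro mult_right_mono) auto
    finally show ?thesis .
  qed
qed

lemma xi_rate_le_if_L2_large:
  assumes "h \<le> n" "0 < Mk 1 n d" "0 < c3" "c3 * Mk 1 n d \<le> Lk 2 h n d"
  shows "xi_rate n h d \<le> (1 + 1 / c3) * (Hk 1 h d * Hk 2 h d ^ 2 / Mk 1 n d ^ 3
    + Lk 2 h n d * Mk 2 n d * Mk 3 n d / Mk 1 n d ^ 4 + Lk 2 h n d * Lk 3 h n d * Hk 4 h d / Mk 1 n d ^ 5)"
proof -
  define m where "m = Mk 1 n d"
  define R1 where "R1 = Hk 1 h d * Hk 2 h d ^ 2 / m^3"
  define R2 where "R2 = Mk 2 n d * Mk 3 n d / m^3"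
  define R3 where "R3 = Lk 2 h n d * Mk 2 n d * Mk 3 n d / m^4"
  define R4 where "R4 = Lk 2 h n d * Lk 3 h n d * Hk 4 h d / m^5"
  have m: "0 < m"
    using assms(2) unfolding m_def .
  have R: "0 \<le> R1" "0 \<le> R3" "0 \<le> R4"
    unfolding R1_def R3_def R4_def using assms(1) Hk_nonneg Lk_nonneg Mk_nonneg m by auto
  have "c3 * R2 = c3 * m * Mk 2 n d * Mk 3 n d / m^4"
    unfolding R2_def using m by (simp add: field_simps eval_nat_numeral)
  also have "\<dots> \<le> R3"
    unfolding R3_def using assms(4) Mk_nonneg m unfolding m_def
    by (intro divide_right_mono mult_right_mono) auto
  finally have "R2 \<le> 1 / c3 * (R1 + R3 + R4)"
    using R assms(3) by (simp add: field_simps)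
  then have "R1 + R2 + R3 + R4 \<le> (1 + 1 / c3) * (R1 + R3 + R4)"
    by (simp add: algebra_simps)
  then show ?thesis
    unfolding xi_rate_def R1_def R2_def R3_def R4_def m_def by (simp add: add_divide_distrib)
qed

theorem lemma4p4:
  shows "(\<forall>c1 c2. c1 > 0 \<longrightarrow> (\<exists>C. \<forall>n h d. admissible c1 c2 n h d \<longrightarrow>
            xi n d \<le> C * ((Hk 1 h d * (Hk 2 h d)^2 + Mk 2 n d * Mk 3 n d) / (Mk 1 n d)^3
              + Lk 2 h n d * Mk 2 n d * Mk 3 n d / (Mk 1 n d)^4
              + Lk 2 h n d * Lk 3 h n d * Hk 4 h d / (Mk 1 n d)^5)))
       \<and> (\<forall>c1 c2 c3. c1 > 0 \<longrightarrow> c3 > 0 \<longrightarrow> (\<exists>C. \<forall>n h d. admissible c1 c2 n h d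
            \<longrightarrow> Lk 2 h n d \<ge> c3 * Mk 1 n d \<longrightarrow>
            xi n d \<le> C * (Hk 1 h d * (Hk 2 h d)^2 / (Mk 1 n d)^3
              + Lk 2 h n d * Mk 2 n d * Mk 3 n d / (Mk 1 n d)^4
              + Lk 2 h n d * Lk 3 h n d * Hk 4 h d / (Mk 1 n d)^5)))"
proof (intro conjI allI impI)
  fix c1 c2 :: real
  assume "c1 > 0"
  then show "\<exists>C. \<forall>n h d. admissible c1 c2 n h d \<longrightarrow>
            xi n d \<le> C * ((Hk 1 h d * (Hk 2 h d)^2 + Mk 2 n d * Mk 3 n d) / (Mk 1 n d)^3
              + Lk 2 h n d * Mk 2 n d * Mk 3 n d / (Mk 1 n d)^4
              + Lk 2 h n d * Lk 3 h n d * Hk 4 h d / (Mk 1 n d)^5)"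
    using xi_le_const_mult_xi_rate unfolding xi_rate_def by blast
next
  fix c1 c2 c3 :: real
  assume "c1 > 0" "c3 > 0"
  obtain C where "0 \<le> C" and C: "\<And>n h d. admissible c1 c2 n h d \<Longrightarrow> xi n d \<le> C * xi_rate n h d"
    using xi_le_const_mult_xi_rate[OF \<open>c1 > 0\<close>] by blast
  show "\<exists>C. \<forall>n h d. admissible c1 c2 n h d \<longrightarrow> Lk 2 h n d \<ge> c3 * Mk 1 n d \<longrightarrow>
            xi n d \<le> C * (Hk 1 h d * (Hk 2 h d)^2 / (Mk 1 n d)^3
              + Lk 2 h n d * Mk 2 n d * Mk 3 n d / (Mk 1 n d)^4
              + Lk 2 h n d * Lk 3 h n d * Hk 4 h d / (Mk 1 n d)^5)"
  proof (intro exI allI impI)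
    fix n h d
    assume adm: "admissible c1 c2 n h d" and L2: "Lk 2 h n d \<ge> c3 * Mk 1 n d"
    have "h \<le> n" "0 < Mk 1 n d"
      using admissibleD(2,4)[OF adm] by auto
    from xi_rate_le_if_L2_large[OF this \<open>c3 > 0\<close> L2]
    show "xi n d \<le> C * (1 + 1 / c3) * (Hk 1 h d * (Hk 2 h d)^2 / (Mk 1 n d)^3
              + Lk 2 h n d * Mk 2 n d * Mk 3 n d / (Mk 1 n d)^4
              + Lk 2 h n d * Lk 3 h n d * Hk 4 h d / (Mk 1 n d)^5)"
      using C[OF adm] mult_left_mono[OF _ \<open>0 \<le> C\<close>] by (simp add: mult.assoc order_trans)
  qed
qed

end
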